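(* Let $\mathfrak g$ be of type $C_n$. For $s\ge1$, $\mathbf A_s=\mathbf A^1_s\sqcup\mathbf A^2_s$ where $$\mathbf A^1_s=\bigl\{\{\beta_{i_k,j_k}\}_{1\le k\le s}:\ i_k,j_k\in I\setminus\{n\},\ i_1<\dots<i_s\le j_s<j_{s-1}<\dots<j_1\bigr\},$$ $$\mathbf A^2_s=\bigl\{\{\alpha_{\ell,n}\}\cup\{\beta_{i_k,j_k}\}_{1\le k\le s-1}:\ \{\beta_{i_k,j_k}\}_{1\le k\le s-1}\in\mathbf A^1_{s-1},\ \ell\in I,\ \ell<i_1\bigr\}$$ (for $s=1$, $\mathbf A^2_1=\{\{\alpha_{\ell,n}\}:\ell\in I\}$). Moreover $\#\mathbf A^1_s=\binom{n-1}{2s}+\binom{n-1}{2s-1}$, $\#\mathbf A^2_s=\binom{n-1}{2s-1}+\binom{n-1}{2s-2}$, and $\sum_{s\ge0}\#\mathbf A_s=2^n$.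
   Context: Simple roots $\alpha_1,\dots,\alpha_n$ of $C_n$ numbered as in Bourbaki ($\alpha_n$ long), $I=\{1,\dots,n\}$. Set $\alpha_{i,j}=\alpha_i+\dots+\alpha_j$ for $i\le j$ and $\beta_{k,\ell}=\alpha_{k,n-1}+\alpha_{\ell,n}$ for $k\le\ell$ in $I\setminus\{n\}$; then $R^+=\{\alpha_{i,j}\}\cup\{\beta_{k,\ell}\}$ and $\theta=\beta_{1,1}$. Partial order: $\lambda\le\mu$ iff $\mu-\lambda$ is a nonnegative integer combination of simple roots. An antichain is a subset of $R^+$ of pairwise incomparable elements; $\Phi(A)=\{\alpha\in R^+:\alpha\ge\beta$ for some $\beta\in A\}$; $A$ is abelian if $\beta_1+\beta_2\notin R$ for all $\beta_1,\beta_2\in\Phi(A)$. $\mathbf A_s$ is the set of abelian antichains with $s$ elements; $\mathbf A_0$ and $\mathbf A^1_0$ consist of the empty antichain. Convention: $\binom{m}{k}=0$ if $k>m$ or $k<0$. *)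

theory Defs
  imports Main
begin

text \<open>A weight in the root lattice is represented by its
coefficient vector w.r.t. the simple roots alpha_1..alpha_n (Bourbaki numbering,
alpha_n long), i.e. a function nat => int (coefficient of alpha_i at index i,
zero outside 1..n).\<close>

type_synonym rootvec = "nat \<Rightarrow> int"

definition alphaC :: "nat \<Rightarrow> nat \<Rightarrow> rootvec" where
  "alphaC i j = (\<lambda>m. if i \<le> m \<and> m \<le> j then 1 else 0)"

definition betaC :: "nat \<Rightarrow> nat \<Rightarrow> nat \<Rightarrow> rootvec" where
  "betaC n k l = (\<lambda>m. alphaC k (n - 1) m + alphaC l n m)"

definition posrootsC :: "nat \<Rightarrow> rootvec set" where
  "posrootsC n = {alphaC i j | i j. 1 \<le> i \<and> i \<le> j \<and> j \<le> n}
     \<union> {betaC n k l | k l. 1 \<le> k \<and> k \<le> l \<and> l \<le> n - 1}"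

definition rootsC :: "nat \<Rightarrow> rootvec set" where
  "rootsC n = posrootsC n \<union> (\<lambda>a. (\<lambda>m. - a m)) ` posrootsC n"

text \<open>lam \<le> mu iff mu - lam is a nonnegative integer combination of simple roots.\<close>
definition rle :: "nat \<Rightarrow> rootvec \<Rightarrow> rootvec \<Rightarrow> bool" where
  "rle n lam mu \<longleftrightarrow> (\<forall>m. m \<in> {1..n} \<longrightarrow> lam m \<le> mu m) \<and> (\<forall>m. m \<notin> {1..n} \<longrightarrow> lam m = mu m)"

definition antichainC :: "nat \<Rightarrow> rootvec set \<Rightarrow> bool" where
  "antichainC n A \<longleftrightarrow> A \<subseteq> posrootsC n \<and>
     (\<forall>a\<in>A. \<forall>b\<in>A. a \<noteq> b \<longrightarrow> \<not> rle n a b)"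

definition PhiC :: "nat \<Rightarrow> rootvec set \<Rightarrow> rootvec set" where
  "PhiC n A = {a \<in> posrootsC n. \<exists>b\<in>A. rle n b a}"

definition abelianC :: "nat \<Rightarrow> rootvec set \<Rightarrow> bool" where
  "abelianC n A \<longleftrightarrow> (\<forall>b1\<in>PhiC n A. \<forall>b2\<in>PhiC n A. (\<lambda>m. b1 m + b2 m) \<notin> rootsC n)"

definition AbC :: "nat \<Rightarrow> nat \<Rightarrow> rootvec set set" where
  "AbC n s = {A. antichainC n A \<and> abelianC n A \<and> card A = s}"

definition admissible :: "nat \<Rightarrow> nat \<Rightarrow> (nat \<Rightarrow> nat) \<Rightarrow> (nat \<Rightarrow> nat) \<Rightarrow> bool" where
  "admissible n s i j \<longleftrightarrow>
     (\<forall>k\<in>{1..s}. 1 \<le> i k \<and> i k \<le> n - 1 \<and> 1 \<le> j k \<and> j k \<le> n - 1) \<and>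
     (\<forall>k\<in>{1..s}. \<forall>k'\<in>{1..s}. k < k' \<longrightarrow> i k < i k' \<and> j k' < j k) \<and>
     (1 \<le> s \<longrightarrow> i s \<le> j s)"

definition A1C :: "nat \<Rightarrow> nat \<Rightarrow> rootvec set set" where
  "A1C n s = {(\<lambda>k. betaC n (i k) (j k)) ` {1..s} | i j. admissible n s i j}"

definition A2C :: "nat \<Rightarrow> nat \<Rightarrow> rootvec set set" where
  "A2C n s = {insert (alphaC l n) ((\<lambda>k. betaC n (i k) (j k)) ` {1..s - 1}) | l i j.
       admissible n (s - 1) i j \<and> 1 \<le> l \<and> l \<le> n \<and> (2 \<le> s \<longrightarrow> l < i 1)}"

end

theory Submission
  imports Defs
begin

(* Write beta(a,b) for beta_{a,b} when b < n and for alpha_{a,n} = beta_{a,n} when b = n.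
   Every positive root alpha_{i,j} with j < n lies below beta(i, j+1) and their sum is the
   root beta_{i,i}, so an abelian antichain contains no such root; conversely all beta(a,b)
   have coefficient 1 at alpha_n, hence any upward closed set of them is abelian.  Moreover
   beta(a,b) <= beta(c,d) iff c <= a and d <= b.  Thus abelian antichains of size s are the
   images of the antichains of size s of the poset of pairs 1 <= a <= b <= n under the
   reverse product order; those are exactly the nested families
   i_1 < ... < i_s <= j_s < ... < j_1.

   The combinatorial heart: a nested family is determined by its set of endpoints U, which
   is an arbitrary subset of {1..N} with ceil(|U|/2) = s.  Hence the families of size s
   number C(N,2s) + C(N,2s-1), those using the endpoint N number C(N-1,2s-1) + C(N-1,2s-2),
   and summing over s counts all subsets of {1..n}, giving 2^n.  The families avoiding n
   give A^1_s, those using n give A^2_s. *)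

(* The poset of pairs (a,b) with 1 <= a <= b <= N, ordered so that p lies below q iff
   fst q <= fst p and snd q <= snd p (the order of the roots beta(a,b)); its antichains. *)
definition intervals :: "nat \<Rightarrow> (nat \<times> nat) set" where
  "intervals N = {(a, b). 1 \<le> a \<and> a \<le> b \<and> b \<le> N}"

definition pair_antichain :: "(nat \<times> nat) set \<Rightarrow> bool" where
  "pair_antichain S \<longleftrightarrow> (\<forall>p\<in>S. \<forall>q\<in>S. p \<noteq> q \<longrightarrow> \<not> (fst q \<le> fst p \<and> snd q \<le> snd p))"

definition pair_antichains :: "nat \<Rightarrow> nat \<Rightarrow> (nat \<times> nat) set set" where
  "pair_antichains N s = {S. S \<subseteq> intervals N \<and> pair_antichain S \<and> card S = s}"

definition nested :: "nat \<Rightarrow> nat \<Rightarrow> (nat \<Rightarrow> nat) \<Rightarrow> (nat \<Rightarrow> nat) \<Rightarrow> bool" where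
  "nested N s i j \<longleftrightarrow>
     (\<forall>k\<in>{1..s}. 1 \<le> i k \<and> i k \<le> N \<and> 1 \<le> j k \<and> j k \<le> N) \<and>
     (\<forall>k\<in>{1..s}. \<forall>k'\<in>{1..s}. k < k' \<longrightarrow> i k < i k' \<and> j k' < j k) \<and>
     (1 \<le> s \<longrightarrow> i s \<le> j s)"

abbreviation family :: "nat \<Rightarrow> (nat \<Rightarrow> nat) \<Rightarrow> (nat \<Rightarrow> nat) \<Rightarrow> (nat \<times> nat) set" where
  "family s i j \<equiv> (\<lambda>k. (i k, j k)) ` {1..s}"

lemma admissible_iff_nested: "admissible n s i j \<longleftrightarrow> nested (n - 1) s i j"
  unfolding admissible_def nested_def ..

lemma finite_intervals: "finite (intervals N)"
  by (rule finite_subset[of _ "{0..N} \<times> {0..N}"]) (auto simp: intervals_def)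

lemma intervals_mono: "N \<le> M \<Longrightarrow> intervals N \<subseteq> intervals M"
  by (auto simp: intervals_def)

lemma nested_mono:
  "nested N s i j \<Longrightarrow> k \<in> {1..s} \<Longrightarrow> k' \<in> {1..s} \<Longrightarrow> k < k' \<Longrightarrow> i k < i k' \<and> j k' < j k"
  by (simp add: nested_def)

lemma nested_le:
  assumes "nested N s i j" "k \<in> {1..s}"
  shows "i k \<le> j k"
proof (cases "k = s")
  case True
  thus ?thesis using assms by (auto simp: nested_def)
next
  case False
  hence "i k < i s" "j s < j k" "i s \<le> j s" using assms by (auto simp: nested_def)
  thus ?thesis by linarith
qed

lemma nested_family_antichain:
  assumes "nested N s i j"
  shows "family s i j \<in> pair_antichains N s"
proof -
  have sub: "family s i j \<subseteq> intervals N"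
    using assms nested_le[OF assms] by (auto simp: nested_def intervals_def)
  have "pair_antichain (family s i j)"
    unfolding pair_antichain_def
  proof (intro ballI impI)
    fix p q assume "p \<in> family s i j" "q \<in> family s i j" "p \<noteq> q"
    then obtain k k' where kk: "k \<in> {1..s}" "k' \<in> {1..s}" "k \<noteq> k'"
      "p = (i k, j k)" "q = (i k', j k')" by blast
    hence "k < k' \<or> k' < k" by auto
    thus "\<not> (fst q \<le> fst p \<and> snd q \<le> snd p)"
      using assms kk unfolding nested_def by (metis fst_conv snd_conv leD)
  qed
  moreover have "inj_on (\<lambda>k. (i k, j k)) {1..s}"
  proof (rule inj_onI)
    fix k k' assume "k \<in> {1..s}" "k' \<in> {1..s}" "(i k, j k) = (i k', j k')"
    thus "k = k'" using assms unfolding nested_def by (metis linorder_neqE_nat less_irrefl prod.inject)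
  qed
  ultimately show ?thesis using sub by (simp add: pair_antichains_def card_image)
qed

lemma pair_antichain_inj_fst: "pair_antichain S \<Longrightarrow> inj_on fst S"
  unfolding pair_antichain_def by (rule inj_onI) (metis nat_le_linear)

lemma increasing_antichain_nested:
  assumes sub: "S \<subseteq> intervals N" and anti: "pair_antichain S"
    and mem: "\<And>k. k \<in> {1..s} \<Longrightarrow> (i k, j k) \<in> S"
    and incr: "\<And>k k'. k \<in> {1..s} \<Longrightarrow> k' \<in> {1..s} \<Longrightarrow> k < k' \<Longrightarrow> i k < i k'"
  shows "nested N s i j"
  unfolding nested_def
proof (intro conjI ballI impI)
  fix k assume "k \<in> {1..s}"
  hence "(i k, j k) \<in> intervals N" using mem sub by blast
  thus "1 \<le> i k" "i k \<le> N" "1 \<le> j k" "j k \<le> N" by (auto simp: intervals_def)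
next
  fix k k' assume kk: "k \<in> {1..s}" "k' \<in> {1..s}" "k < k'"
  show "i k < i k'" using incr kk by auto
  have "\<not> (i k \<le> i k' \<and> j k \<le> j k')"
    using anti mem[OF kk(1)] mem[OF kk(2)] incr[OF kk] unfolding pair_antichain_def
    by (metis fst_conv less_irrefl snd_conv)
  thus "j k' < j k" using incr[OF kk] by auto
next
  assume "1 \<le> s"
  hence "(i s, j s) \<in> intervals N" using mem sub by auto
  thus "i s \<le> j s" by (auto simp: intervals_def)
qed

lemma antichain_nested_family:
  assumes "S \<in> pair_antichains N s"
  shows "\<exists>i j. nested N s i j \<and> S = family s i j"
proof -
  have sub: "S \<subseteq> intervals N" and anti: "pair_antichain S" and cS: "card S = s"
    using assms by (auto simp: pair_antichains_def)
  have injf: "inj_on fst S" by (rule pair_antichain_inj_fst[OF anti])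
  define xs where "xs = sorted_list_of_set (fst ` S)"
  have fin: "finite S" using sub finite_intervals finite_subset by blast
  have lxs: "length xs = s" using injf cS by (simp add: xs_def card_image)
  have sxs: "sorted_wrt (<) xs" by (simp add: xs_def)
  have setxs: "set xs = fst ` S" using fin by (simp add: xs_def)
  define i where "i k = xs ! (k - 1)" for k
  define j where "j k = snd (the_inv_into S fst (i k))" for k
  have pair_in: "(i k, j k) \<in> S" and pair_eq: "the_inv_into S fst (i k) = (i k, j k)"
    if "k \<in> {1..s}" for k
  proof -
    have "i k \<in> fst ` S" using that lxs setxs by (auto simp: i_def)
    hence inS: "the_inv_into S fst (i k) \<in> S" and "fst (the_inv_into S fst (i k)) = i k"
      using injf by (auto intro: the_inv_into_into f_the_inv_into_f)
    thus eq: "the_inv_into S fst (i k) = (i k, j k)" by (simp add: j_def prod_eq_iff)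
    show "(i k, j k) \<in> S" using inS eq by simp
  qed
  have incr: "i k < i k'" if "k \<in> {1..s}" "k' \<in> {1..s}" "k < k'" for k k'
    using that sorted_wrt_nth_less[OF sxs, of "k - 1" "k' - 1"] lxs by (auto simp: i_def)
  have "S \<subseteq> family s i j"
  proof
    fix p assume p: "p \<in> S"
    then obtain t where t: "t < s" "xs ! t = fst p" using lxs setxs by (metis image_eqI in_set_conv_nth)
    hence "Suc t \<in> {1..s}" "i (Suc t) = fst p" by (auto simp: i_def)
    moreover from this have "p = (i (Suc t), j (Suc t))"
      using pair_eq[of "Suc t"] injf p by (metis the_inv_into_f_f)
    ultimately show "p \<in> family s i j" by blast
  qed
  hence "S = family s i j" using pair_in by blast
  moreover have "nested N s i j"
    by (rule increasing_antichain_nested[OF sub anti]) (simp_all add: pair_in incr)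
  ultimately show ?thesis by blast
qed

lemma image_nested_families:
  "{F (family s i j) | i j. nested N s i j} = F ` pair_antichains N s"
proof (intro set_eqI iffI)
  fix X assume "X \<in> {F (family s i j) | i j. nested N s i j}"
  then obtain i j where "X = F (family s i j)" "nested N s i j" by blast
  thus "X \<in> F ` pair_antichains N s" using nested_family_antichain by blast
next
  fix X assume "X \<in> F ` pair_antichains N s"
  then obtain S where "S \<in> pair_antichains N s" "X = F S" by blast
  thus "X \<in> {F (family s i j) | i j. nested N s i j}" using antichain_nested_family by blast
qed

definition endpoints :: "(nat \<times> nat) set \<Rightarrow> nat set" where
  "endpoints S = fst ` S \<union> snd ` S"

definition halfsize_sets :: "nat \<Rightarrow> nat \<Rightarrow> nat set set" where
  "halfsize_sets N s = {U. U \<subseteq> {1..N} \<and> (card U + 1) div 2 = s}"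

lemma endpoints_family: "endpoints (family s i j) = i ` {1..s} \<union> j ` {1..s}"
  by (auto simp: endpoints_def image_image)

(* The endpoints of a nested family in increasing order: i_1, ..., i_s, then j_s (unless it
   coincides with i_s), ..., j_1. *)
definition endpoint_count :: "nat \<Rightarrow> (nat \<Rightarrow> nat) \<Rightarrow> (nat \<Rightarrow> nat) \<Rightarrow> nat" where
  "endpoint_count s i j = (if i s = j s then 2 * s - 1 else 2 * s)"

definition endpoint_seq :: "nat \<Rightarrow> (nat \<Rightarrow> nat) \<Rightarrow> (nat \<Rightarrow> nat) \<Rightarrow> nat \<Rightarrow> nat" where
  "endpoint_seq s i j p = (if p < s then i (p + 1) else j (endpoint_count s i j - p))"

lemma endpoint_seq_strict_mono:
  assumes nest: "nested N s i j" and pq: "p < q" "q < endpoint_count s i j"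
  shows "endpoint_seq s i j p < endpoint_seq s i j q"
proof -
  let ?L = "endpoint_count s i j"
  note mono = nested_mono[OF nest]
  consider "q < s" | "p < s" "s \<le> q" | "s \<le> p" by linarith
  thus ?thesis
  proof cases
    case 1
    thus ?thesis using pq mono[of "p + 1" "q + 1"] by (auto simp: endpoint_seq_def)
  next
    case 2
    have s1: "1 \<le> s" and r: "?L - q \<in> {1..s}"
      using 2 pq by (auto simp: endpoint_count_def split: if_splits)
    have "i (p + 1) \<le> i s" using mono[of "p + 1" s] 2 by (cases "p + 1 = s") auto
    moreover have "i s < j (?L - q)"
    proof (cases "?L - q = s")
      case True
      hence "i s \<noteq> j s" using 2 pq by (auto simp: endpoint_count_def split: if_splits)
      thus ?thesis using True nested_le[OF nest, of s] s1 by simp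
    next
      case False
      hence "j s < j (?L - q)" using mono[of "?L - q" s] r s1 by auto
      thus ?thesis using nested_le[OF nest, of s] s1 by simp
    qed
    ultimately show ?thesis using 2 by (simp add: endpoint_seq_def)
  next
    case 3
    have "?L - q \<in> {1..s}" "?L - p \<in> {1..s}" "?L - q < ?L - p"
      using pq 3 by (auto simp: endpoint_count_def split: if_splits)
    thus ?thesis using mono[of "?L - q" "?L - p"] 3 pq by (simp add: endpoint_seq_def)
  qed
qed

lemma endpoint_seq_set:
  "endpoint_seq s i j ` {0..<endpoint_count s i j} = i ` {1..s} \<union> j ` {1..s}"
proof (intro equalityI subsetI)
  fix x assume "x \<in> endpoint_seq s i j ` {0..<endpoint_count s i j}"
  then obtain p where p: "p < endpoint_count s i j" "x = endpoint_seq s i j p" by auto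
  show "x \<in> i ` {1..s} \<union> j ` {1..s}"
  proof (cases "p < s")
    case True
    thus ?thesis using p by (auto simp: endpoint_seq_def)
  next
    case False
    hence "endpoint_count s i j - p \<in> {1..s}" using p by (auto simp: endpoint_count_def split: if_splits)
    thus ?thesis using p False by (auto simp: endpoint_seq_def)
  qed
next
  fix x assume "x \<in> i ` {1..s} \<union> j ` {1..s}"
  then consider k where "k \<in> {1..s}" "x = i k" | k where "k \<in> {1..s}" "x = j k" by blast
  thus "x \<in> endpoint_seq s i j ` {0..<endpoint_count s i j}"
  proof cases
    case 1
    hence "k - 1 < endpoint_count s i j" "endpoint_seq s i j (k - 1) = x"
      by (auto simp: endpoint_count_def endpoint_seq_def)
    thus ?thesis by force
  next
    case 2
    show ?thesis
    proof (cases "s \<le> endpoint_count s i j - k")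
      case True
      hence "endpoint_count s i j - k < endpoint_count s i j"
        "endpoint_seq s i j (endpoint_count s i j - k) = x"
        using 2 by (auto simp: endpoint_count_def endpoint_seq_def)
      thus ?thesis by force
    next
      case False
      hence "k = s" "i s = j s" using 2 by (auto simp: endpoint_count_def split: if_splits)
      hence "s - 1 < endpoint_count s i j" "endpoint_seq s i j (s - 1) = x"
        using 2 by (auto simp: endpoint_count_def endpoint_seq_def)
      thus ?thesis by force
    qed
  qed
qed

lemma endpoint_count_half: "(endpoint_count s i j + 1) div 2 = s"
  by (cases s) (auto simp: endpoint_count_def)

lemma nested_sorted_endpoints:
  assumes nest: "nested N s i j"
  defines "U \<equiv> endpoints (family s i j)"
  shows "card U = endpoint_count s i j"
    and "\<And>k. k \<in> {1..s} \<Longrightarrow> sorted_list_of_set U ! (k - 1) = i k"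
    and "\<And>k. k \<in> {1..s} \<Longrightarrow> sorted_list_of_set U ! (card U - k) = j k"
proof -
  let ?L = "endpoint_count s i j"
  define ys where "ys = map (endpoint_seq s i j) [0..<?L]"
  have sorted: "sorted_wrt (<) ys"
    unfolding sorted_wrt_iff_nth_less ys_def using endpoint_seq_strict_mono[OF nest] by auto
  have set: "set ys = U" unfolding ys_def U_def endpoints_family
    using endpoint_seq_set by simp
  have len: "length ys = ?L" by (simp add: ys_def)
  show card: "card U = ?L"
    using set sorted len by (metis distinct_card strict_sorted_iff)
  have finU: "finite U" by (simp add: U_def endpoints_def)
  have sl: "sorted_list_of_set U = ys"
    using sorted_list_of_set_unique[OF finU] sorted set len card by auto
  fix k assume k: "k \<in> {1..s}"
  show "sorted_list_of_set U ! (k - 1) = i k"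
    using k by (auto simp: sl ys_def endpoint_seq_def endpoint_count_def)
  show "sorted_list_of_set U ! (card U - k) = j k"
  proof (cases "s \<le> ?L - k")
    case True
    thus ?thesis using k by (auto simp: sl card ys_def endpoint_seq_def endpoint_count_def)
  next
    case False
    hence "k = s" "i s = j s" using k by (auto simp: endpoint_count_def split: if_splits)
    thus ?thesis using k False by (auto simp: sl card ys_def endpoint_seq_def endpoint_count_def)
  qed
qed

(* The inverse construction: pair the k-th smallest element of U with its k-th largest. *)
definition family_of :: "nat set \<Rightarrow> (nat \<times> nat) set" where
  "family_of U = family ((card U + 1) div 2)
     (\<lambda>k. sorted_list_of_set U ! (k - 1)) (\<lambda>k. sorted_list_of_set U ! (card U - k))"

lemma family_of_nested:
  assumes U: "U \<subseteq> {1..N}"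
  defines "xs \<equiv> sorted_list_of_set U"
  shows "nested N ((card U + 1) div 2) (\<lambda>k. xs ! (k - 1)) (\<lambda>k. xs ! (card U - k))"
proof -
  let ?s = "(card U + 1) div 2"
  have finU: "finite U" using U by (rule finite_subset) simp
  have lxs: "length xs = card U" by (simp add: xs_def)
  have mem: "xs ! p \<in> U" if "p < card U" for p
    using that lxs finU by (metis nth_mem set_sorted_list_of_set xs_def)
  have less: "xs ! p < xs ! q" if "p < q" "q < card U" for p q
    using sorted_wrt_nth_less[of "(<)" xs] that lxs by (simp add: xs_def)
  show ?thesis
    unfolding nested_def
  proof (intro conjI ballI impI)
    fix k assume "k \<in> {1..?s}"
    hence "k - 1 < card U" "card U - k < card U" by auto
    hence "xs ! (k - 1) \<in> U" "xs ! (card U - k) \<in> U" using mem by auto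
    thus "1 \<le> xs ! (k - 1)" "xs ! (k - 1) \<le> N" "1 \<le> xs ! (card U - k)" "xs ! (card U - k) \<le> N"
      using U by auto
  next
    fix k k' assume "k \<in> {1..?s}" "k' \<in> {1..?s}" "k < k'"
    thus "xs ! (k - 1) < xs ! (k' - 1)" "xs ! (card U - k') < xs ! (card U - k)"
      by (auto intro: less)
  next
    assume "1 \<le> ?s"
    moreover have "2 * ?s = card U \<or> 2 * ?s = card U + 1" by linarith
    ultimately have "?s - 1 \<le> card U - ?s" "card U - ?s < card U" by auto
    thus "xs ! (?s - 1) \<le> xs ! (card U - ?s)"
      using less[of "?s - 1" "card U - ?s"] by (cases "?s - 1 = card U - ?s") auto
  qed
qed

(* Its endpoints are all elements of U: the first ceil(|U|/2) as left ends, the rest as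
   right ends. *)
lemma endpoints_family_of:
  assumes "finite U"
  shows "endpoints (family_of U) = U"
proof -
  let ?s = "(card U + 1) div 2" and ?xs = "sorted_list_of_set U"
  have lxs: "length ?xs = card U" by simp
  have "endpoints (family_of U) = (\<lambda>k. ?xs ! (k - 1)) ` {1..?s} \<union> (\<lambda>k. ?xs ! (card U - k)) ` {1..?s}"
    unfolding family_of_def endpoints_family ..
  also have "\<dots> = (!) ?xs ` {0..<card U}"
  proof (intro equalityI subsetI)
    fix x assume "x \<in> (!) ?xs ` {0..<card U}"
    then obtain p where p: "p < card U" "x = ?xs ! p" by auto
    show "x \<in> (\<lambda>k. ?xs ! (k - 1)) ` {1..?s} \<union> (\<lambda>k. ?xs ! (card U - k)) ` {1..?s}"
    proof (cases "p < ?s")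
      case True
      hence "Suc p \<in> {1..?s}" "x = ?xs ! (Suc p - 1)" using p by auto
      thus ?thesis by blast
    next
      case False
      hence "card U - p \<in> {1..?s}" "x = ?xs ! (card U - (card U - p))" using p by auto
      thus ?thesis by blast
    qed
  qed force
  also have "\<dots> = U" using assms by (metis lxs atLeast0LessThan list.set_map map_nth set_sorted_list_of_set set_upt)
  finally show ?thesis .
qed

lemma family_of_endpoints:
  assumes "S \<in> pair_antichains N s"
  shows "family_of (endpoints S) = S"
proof -
  obtain i j where nest: "nested N s i j" and S: "S = family s i j"
    using antichain_nested_family[OF assms] by blast
  let ?U = "endpoints (family s i j)"
  have "(card ?U + 1) div 2 = s"
    using nested_sorted_endpoints(1)[OF nest] endpoint_count_half by simp
  hence "family_of ?U = family s (\<lambda>k. sorted_list_of_set ?U ! (k - 1))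
                                   (\<lambda>k. sorted_list_of_set ?U ! (card ?U - k))"
    by (simp add: family_of_def)
  also have "\<dots> = family s i j"
    using nested_sorted_endpoints(2,3)[OF nest] by (intro image_cong) auto
  finally show ?thesis using S by simp
qed

lemma endpoints_bij: "bij_betw endpoints (pair_antichains N s) (halfsize_sets N s)"
proof (rule bij_betw_byWitness[where f' = family_of])
  show "\<forall>S\<in>pair_antichains N s. family_of (endpoints S) = S"
    using family_of_endpoints by blast
  show "\<forall>U\<in>halfsize_sets N s. endpoints (family_of U) = U"
  proof
    fix U assume "U \<in> halfsize_sets N s"
    hence "finite U" unfolding halfsize_sets_def using finite_subset by blast
    thus "endpoints (family_of U) = U" by (rule endpoints_family_of)
  qed
  show "endpoints ` pair_antichains N s \<subseteq> halfsize_sets N s"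
  proof
    fix U assume "U \<in> endpoints ` pair_antichains N s"
    then obtain i j where nest: "nested N s i j" and U: "U = endpoints (family s i j)"
      using antichain_nested_family by blast
    have "U \<subseteq> {1..N}" unfolding U endpoints_family using nest by (auto simp: nested_def)
    moreover have "(card U + 1) div 2 = s"
      using nested_sorted_endpoints(1)[OF nest] endpoint_count_half by (simp add: U)
    ultimately show "U \<in> halfsize_sets N s" by (simp add: halfsize_sets_def)
  qed
  show "family_of ` halfsize_sets N s \<subseteq> pair_antichains N s"
  proof
    fix S assume "S \<in> family_of ` halfsize_sets N s"
    then obtain U where U: "U \<subseteq> {1..N}" "(card U + 1) div 2 = s" and S: "S = family_of U"
      by (auto simp: halfsize_sets_def)
    show "S \<in> pair_antichains N s"
      using nested_family_antichain[OF family_of_nested[OF U(1)]] unfolding S family_of_def U(2) .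
  qed
qed

lemma card_pair_antichains_where:
  "card {S \<in> pair_antichains N s. P (endpoints S)} = card {U \<in> halfsize_sets N s. P U}"
proof -
  have "inj_on endpoints {S \<in> pair_antichains N s. P (endpoints S)}"
    using bij_betw_imp_inj_on[OF endpoints_bij] by (rule inj_on_subset) auto
  moreover have "endpoints ` {S \<in> pair_antichains N s. P (endpoints S)}
      = {U \<in> endpoints ` pair_antichains N s. P U}" by blast
  ultimately show ?thesis using bij_betw_imp_surj_on[OF endpoints_bij] card_image by fastforce
qed

lemma card_subsets_two_sizes:
  assumes "finite A" "a \<noteq> b"
  shows "card {U. U \<subseteq> A \<and> (card U = a \<or> card U = b)} = (card A choose a) + (card A choose b)"
proof -
  have fin: "finite {U. U \<subseteq> A \<and> card U = k}" for k
    by (rule finite_subset[of _ "Pow A"]) (use assms(1) in auto)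
  have "{U. U \<subseteq> A \<and> (card U = a \<or> card U = b)} = {U. U \<subseteq> A \<and> card U = a} \<union> {U. U \<subseteq> A \<and> card U = b}"
    by blast
  moreover have "{U. U \<subseteq> A \<and> card U = a} \<inter> {U. U \<subseteq> A \<and> card U = b} = {}"
    using assms(2) by blast
  ultimately show ?thesis by (simp add: card_Un_disjoint[OF fin fin] n_subsets[OF assms(1)])
qed

(* Subsets of half-size s are those of size 2s or 2s - 1. *)
lemma card_halfsize_sets:
  assumes "1 \<le> s"
  shows "card (halfsize_sets N s) = (N choose (2 * s)) + (N choose (2 * s - 1))"
proof -
  have "halfsize_sets N s = {U. U \<subseteq> {1..N} \<and> (card U = 2 * s \<or> card U = 2 * s - 1)}"
    using assms by (auto simp: halfsize_sets_def)
  thus ?thesis using card_subsets_two_sizes[of "{1..N}" "2 * s" "2 * s - 1"] assms by simp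
qed

(* Removing the top element N identifies the half-size-s subsets of {1..N} containing N
   with the subsets of {1..N-1} of size 2s-1 or 2s-2. *)
lemma card_halfsize_sets_containing_top:
  assumes "1 \<le> s" "1 \<le> N"
  shows "card {U \<in> halfsize_sets N s. N \<in> U} = ((N - 1) choose (2 * s - 1)) + ((N - 1) choose (2 * s - 2))"
proof -
  let ?V = "{V. V \<subseteq> {1..N - 1} \<and> (card V = 2 * s - 1 \<or> card V = 2 * s - 2)}"
  have top: "N \<notin> V" if "V \<subseteq> {1..N - 1}" for V using that assms(2) by auto
  have "{U \<in> halfsize_sets N s. N \<in> U} = insert N ` ?V"
  proof (intro equalityI subsetI)
    fix U assume "U \<in> {U \<in> halfsize_sets N s. N \<in> U}"
    hence U: "U \<subseteq> {1..N}" "(card U + 1) div 2 = s" "N \<in> U" by (auto simp: halfsize_sets_def)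
    have "finite U" using U(1) by (rule finite_subset) simp
    hence "card (U - {N}) + 1 = card U" using U(3) by (metis Suc_eq_plus1 card_Suc_Diff1)
    hence "U - {N} \<in> ?V" using U assms(1) by auto
    moreover have "U = insert N (U - {N})" using U(3) by auto
    ultimately show "U \<in> insert N ` ?V" by blast
  next
    fix U assume "U \<in> insert N ` ?V"
    then obtain V where V: "V \<in> ?V" and U: "U = insert N V" by blast
    hence Vsub: "V \<subseteq> {1..N - 1}" and Vcard: "card V = 2 * s - 1 \<or> card V = 2 * s - 2" by auto
    have "finite V" using Vsub by (rule finite_subset) simp
    hence "card U = card V + 1" using U top Vsub by simp
    moreover have "U \<subseteq> {1..N}" unfolding U using Vsub assms(2) by (auto simp: subset_iff)
    ultimately show "U \<in> {U \<in> halfsize_sets N s. N \<in> U}" using U Vcard assms by (auto simp: halfsize_sets_def)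
  qed
  moreover have "inj_on (insert N) ?V"
    by (rule inj_onI) (metis (no_types, lifting) mem_Collect_eq insert_ident top)
  ultimately have "card {U \<in> halfsize_sets N s. N \<in> U} = card ?V" by (simp add: card_image)
  thus ?thesis using card_subsets_two_sizes[of "{1..N - 1}" "2 * s - 1" "2 * s - 2"] assms by simp
qed

lemma halfsize_sets_le: "U \<in> halfsize_sets N s \<Longrightarrow> s \<le> N"
proof -
  assume "U \<in> halfsize_sets N s"
  hence "U \<subseteq> {1..N}" "(card U + 1) div 2 = s" by (auto simp: halfsize_sets_def)
  moreover from this have "card U \<le> N" using card_mono[of "{1..N}" U] by simp
  ultimately show "s \<le> N" by linarith
qed

(* Summing over all half-sizes counts all subsets of {1..N}. *)
lemma sum_card_halfsize_sets: "(\<Sum>s\<le>N. card (halfsize_sets N s)) = 2 ^ N"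
proof -
  have fin: "finite (halfsize_sets N s)" for s
    by (rule finite_subset[of _ "Pow {1..N}"]) (auto simp: halfsize_sets_def)
  have "(\<Union>s\<le>N. halfsize_sets N s) = Pow {1..N}"
  proof (intro equalityI subsetI)
    fix U assume "U \<in> Pow {1..N}"
    hence "U \<in> halfsize_sets N ((card U + 1) div 2)" by (simp add: halfsize_sets_def)
    thus "U \<in> (\<Union>s\<le>N. halfsize_sets N s)" using halfsize_sets_le by blast
  qed (auto simp: halfsize_sets_def)
  moreover have "(\<Sum>s\<le>N. card (halfsize_sets N s)) = card (\<Union>s\<le>N. halfsize_sets N s)"
    by (rule card_UN_disjoint[symmetric]) (auto simp: fin halfsize_sets_def)
  ultimately show ?thesis by (simp add: card_Pow)
qed

(* The root attached to a pair: beta(a,b) = beta_{a,b}, which for b = n is alpha_{a,n}. *)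
definition beta_pair :: "nat \<Rightarrow> nat \<times> nat \<Rightarrow> rootvec" where
  "beta_pair n p = betaC n (fst p) (snd p)"

lemma alphaC_eq_betaC: "1 \<le> n \<Longrightarrow> l \<le> n \<Longrightarrow> alphaC l n = betaC n l n"
  by (auto simp: alphaC_def betaC_def fun_eq_iff)

lemma rle_refl: "rle n x x"
  by (simp add: rle_def)

lemma beta_pair_rle:
  assumes "1 \<le> n" "p \<in> intervals n" "q \<in> intervals n"
  shows "rle n (beta_pair n p) (beta_pair n q) \<longleftrightarrow> fst q \<le> fst p \<and> snd q \<le> snd p"
proof -
  obtain a b where p: "p = (a, b)" "1 \<le> a" "a \<le> b" "b \<le> n" using assms by (auto simp: intervals_def)
  obtain c d where q: "q = (c, d)" "1 \<le> c" "c \<le> d" "d \<le> n" using assms by (auto simp: intervals_def)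
  show ?thesis
  proof
    assume r: "rle n (beta_pair n p) (beta_pair n q)"
    have ra: "beta_pair n p a \<le> beta_pair n q a" and rb: "beta_pair n p b \<le> beta_pair n q b"
      using r p q unfolding rle_def by auto
    have "c \<le> a"
    proof (rule ccontr)
      assume "\<not> c \<le> a"
      thus False using ra p q by (auto simp: beta_pair_def betaC_def alphaC_def split: if_splits)
    qed
    moreover have "d \<le> b"
    proof (rule ccontr)
      assume "\<not> d \<le> b"
      thus False using rb p q by (auto simp: beta_pair_def betaC_def alphaC_def split: if_splits)
    qed
    ultimately show "fst q \<le> fst p \<and> snd q \<le> snd p" using p q by simp
  next
    assume "fst q \<le> fst p \<and> snd q \<le> snd p"
    thus "rle n (beta_pair n p) (beta_pair n q)"
      using p q unfolding rle_def by (auto simp: beta_pair_def betaC_def alphaC_def)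
  qed
qed

lemma beta_pair_inj: "1 \<le> n \<Longrightarrow> inj_on (beta_pair n) (intervals n)"
  by (rule inj_onI) (metis beta_pair_rle rle_refl prod_eq_iff le_antisym)

lemma beta_pair_posroot:
  assumes "1 \<le> n" "p \<in> intervals n"
  shows "beta_pair n p \<in> posrootsC n"
proof -
  obtain a b where p: "p = (a, b)" "1 \<le> a" "a \<le> b" "b \<le> n" using assms by (auto simp: intervals_def)
  show ?thesis
  proof (cases "b = n")
    case True
    hence "beta_pair n p = alphaC a n" using p alphaC_eq_betaC[of n a] assms by (simp add: beta_pair_def)
    moreover have "alphaC a n \<in> {alphaC i j | i j. 1 \<le> i \<and> i \<le> j \<and> j \<le> n}"
      using p True by (intro CollectI exI[of _ a] exI[of _ n]) auto
    ultimately show ?thesis unfolding posrootsC_def by simp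
  next
    case False
    hence "b \<le> n - 1" using p by simp
    thus ?thesis using p unfolding posrootsC_def beta_pair_def by auto
  qed
qed

lemma posroot_cases:
  assumes "1 \<le> n" "x \<in> posrootsC n"
  shows "x \<in> beta_pair n ` intervals n \<or> (\<exists>i j. 1 \<le> i \<and> i \<le> j \<and> j < n \<and> x = alphaC i j)"
proof -
  from assms(2) consider i j where "1 \<le> i" "i \<le> j" "j \<le> n" "x = alphaC i j"
    | k l where "1 \<le> k" "k \<le> l" "l \<le> n - 1" "x = betaC n k l"
    unfolding posrootsC_def by blast
  thus ?thesis
  proof cases
    case 1
    show ?thesis
    proof (cases "j = n")
      case True
      hence "x = beta_pair n (i, n)" "(i, n) \<in> intervals n"
        using 1 alphaC_eq_betaC[of n i] assms by (auto simp: beta_pair_def intervals_def)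
      thus ?thesis by blast
    next
      case False
      hence "j < n" using 1 by simp
      thus ?thesis using 1 by blast
    qed
  next
    case 2
    hence "x = beta_pair n (k, l)" "(k, l) \<in> intervals n" by (auto simp: beta_pair_def intervals_def)
    thus ?thesis by blast
  qed
qed

lemma root_coeff_top_le1: "x \<in> rootsC n \<Longrightarrow> x n \<le> 1"
  unfolding rootsC_def posrootsC_def by (auto simp: alphaC_def betaC_def)

lemma beta_pair_coeff_top: "p \<in> intervals n \<Longrightarrow> beta_pair n p n = 1"
  by (auto simp: beta_pair_def betaC_def alphaC_def intervals_def)

(* Hence the upper closure of a set of beta's consists of roots with alpha_n-coefficient at
   least 1, and no two of them add up to a root. *)
lemma beta_pairs_abelian:
  assumes "S \<subseteq> intervals n"
  shows "abelianC n (beta_pair n ` S)"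
proof -
  have ge: "1 \<le> x n" if x: "x \<in> PhiC n (beta_pair n ` S)" for x
  proof -
    obtain p where p: "p \<in> S" "rle n (beta_pair n p) x" using x unfolding PhiC_def by blast
    have "beta_pair n p n \<le> x n"
      using p(2) by (cases "n = 0") (auto simp: rle_def)
    thus ?thesis using beta_pair_coeff_top p(1) assms by fastforce
  qed
  show ?thesis unfolding abelianC_def
  proof (intro ballI notI)
    fix b1 b2 assume "b1 \<in> PhiC n (beta_pair n ` S)" "b2 \<in> PhiC n (beta_pair n ` S)"
      "(\<lambda>m. b1 m + b2 m) \<in> rootsC n"
    hence "1 \<le> b1 n" "1 \<le> b2 n" "b1 n + b2 n \<le> 1"
      using ge root_coeff_top_le1[of "\<lambda>m. b1 m + b2 m" n] by auto
    thus False by simp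
  qed
qed

(* A root alpha_{i,j} with j < n lies below beta(i, j+1), and alpha_{i,j} + beta(i, j+1)
   is the root beta_{i,i}; so it cannot belong to an abelian set of positive roots. *)
lemma short_root_not_abelian:
  assumes "1 \<le> i" "i \<le> j" "j < n" "alphaC i j \<in> A" "A \<subseteq> posrootsC n"
  shows "\<not> abelianC n A"
proof
  assume ab: "abelianC n A"
  let ?y = "beta_pair n (i, Suc j)"
  have "?y \<in> posrootsC n"
    using assms by (intro beta_pair_posroot) (auto simp: intervals_def)
  moreover have "rle n (alphaC i j) ?y"
    using assms unfolding rle_def by (auto simp: beta_pair_def betaC_def alphaC_def)
  ultimately have y: "?y \<in> PhiC n A" using assms(4) by (auto simp: PhiC_def)
  have x: "alphaC i j \<in> PhiC n A" using assms(4,5) rle_refl by (auto simp: PhiC_def)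
  have "(\<lambda>m. alphaC i j m + ?y m) = betaC n i i"
    using assms by (auto simp: beta_pair_def betaC_def alphaC_def fun_eq_iff)
  moreover have "betaC n i i \<in> posrootsC n"
    using assms unfolding posrootsC_def by (intro UnI2 CollectI exI[of _ i]) auto
  hence "betaC n i i \<in> rootsC n" unfolding rootsC_def by blast
  ultimately show False using ab x y unfolding abelianC_def by metis
qed

lemma beta_pairs_antichain:
  assumes "1 \<le> n" "S \<subseteq> intervals n"
  shows "antichainC n (beta_pair n ` S) \<longleftrightarrow> pair_antichain S"
proof -
  have inj: "inj_on (beta_pair n) S" using beta_pair_inj[OF assms(1)] assms(2) by (rule inj_on_subset)
  have "beta_pair n ` S \<subseteq> posrootsC n" using beta_pair_posroot[OF assms(1)] assms(2) by blast
  moreover have "(\<forall>a\<in>beta_pair n ` S. \<forall>b\<in>beta_pair n ` S. a \<noteq> b \<longrightarrow> \<not> rle n a b)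
      \<longleftrightarrow> (\<forall>p\<in>S. \<forall>q\<in>S. p \<noteq> q \<longrightarrow> \<not> rle n (beta_pair n p) (beta_pair n q))"
    using inj by (auto simp: inj_on_eq_iff)
  moreover have "\<forall>p\<in>S. \<forall>q\<in>S. rle n (beta_pair n p) (beta_pair n q) \<longleftrightarrow> fst q \<le> fst p \<and> snd q \<le> snd p"
    using assms beta_pair_rle by blast
  hence "(\<forall>p\<in>S. \<forall>q\<in>S. p \<noteq> q \<longrightarrow> \<not> rle n (beta_pair n p) (beta_pair n q)) \<longleftrightarrow> pair_antichain S"
    unfolding pair_antichain_def by blast
  ultimately show ?thesis unfolding antichainC_def by simp
qed

lemma abelian_antichains_eq:
  assumes "1 \<le> n"
  shows "AbC n s = image (beta_pair n) ` pair_antichains n s"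
proof (intro equalityI subsetI)
  fix A assume "A \<in> AbC n s"
  hence anti: "antichainC n A" and ab: "abelianC n A" and cA: "card A = s" by (auto simp: AbC_def)
  have sub: "A \<subseteq> posrootsC n" using anti by (simp add: antichainC_def)
  have "A \<subseteq> beta_pair n ` intervals n"
  proof
    fix x assume "x \<in> A"
    thus "x \<in> beta_pair n ` intervals n"
      using posroot_cases[OF assms] short_root_not_abelian[OF _ _ _ _ sub] ab sub by blast
  qed
  then obtain S where S: "S \<subseteq> intervals n" "A = beta_pair n ` S" by (auto simp: subset_image_iff)
  have "inj_on (beta_pair n) S" using beta_pair_inj[OF assms] S(1) by (rule inj_on_subset)
  hence "S \<in> pair_antichains n s"
    using S anti cA beta_pairs_antichain[OF assms S(1)] by (simp add: pair_antichains_def card_image)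
  thus "A \<in> image (beta_pair n) ` pair_antichains n s" using S(2) by blast
next
  fix A assume "A \<in> image (beta_pair n) ` pair_antichains n s"
  then obtain S where S: "S \<subseteq> intervals n" "pair_antichain S" "card S = s" "A = beta_pair n ` S"
    by (auto simp: pair_antichains_def)
  have "inj_on (beta_pair n) S" using beta_pair_inj[OF assms] S(1) by (rule inj_on_subset)
  thus "A \<in> AbC n s"
    using S beta_pairs_abelian beta_pairs_antichain[OF assms S(1)] by (simp add: AbC_def card_image)
qed

lemma antichains_avoiding_top:
  "pair_antichains (n - 1) s = {S \<in> pair_antichains n s. n \<notin> endpoints S}"
proof (intro equalityI subsetI)
  fix S assume "S \<in> pair_antichains (n - 1) s"
  thus "S \<in> {S \<in> pair_antichains n s. n \<notin> endpoints S}"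
    by (auto simp: pair_antichains_def intervals_def endpoints_def)
next
  fix S assume S: "S \<in> {S \<in> pair_antichains n s. n \<notin> endpoints S}"
  have "S \<subseteq> intervals (n - 1)"
  proof
    fix p assume "p \<in> S"
    hence "p \<in> intervals n" "snd p \<noteq> n" using S by (auto simp: pair_antichains_def endpoints_def)
    thus "p \<in> intervals (n - 1)" by (auto simp: intervals_def)
  qed
  thus "S \<in> pair_antichains (n - 1) s" using S by (simp add: pair_antichains_def)
qed

lemma A1C_eq: "A1C n s = image (beta_pair n) ` pair_antichains (n - 1) s"
proof -
  have "A1C n s = {image (beta_pair n) (family s i j) | i j. nested (n - 1) s i j}"
    by (simp add: A1C_def admissible_iff_nested image_image beta_pair_def)
  thus ?thesis using image_nested_families[of "image (beta_pair n)" s "n - 1"] by simp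
qed

lemma nested_tail:
  assumes "nested N s i j" "1 \<le> s"
  shows "nested (j 1 - 1) (s - 1) (\<lambda>k. i (Suc k)) (\<lambda>k. j (Suc k))"
  unfolding nested_def
proof (intro conjI ballI impI)
  fix k assume "k \<in> {1..s - 1}"
  hence k: "Suc k \<in> {1..s}" "1 < Suc k" by auto
  hence "j (Suc k) < j 1" "i (Suc k) \<le> j (Suc k)" "1 \<le> i (Suc k)"
    using assms nested_le[OF assms(1)] by (auto simp: nested_def)
  thus "1 \<le> i (Suc k)" "i (Suc k) \<le> j 1 - 1" "1 \<le> j (Suc k)" "j (Suc k) \<le> j 1 - 1" by auto
next
  fix k k' assume "k \<in> {1..s - 1}" "k' \<in> {1..s - 1}" "k < k'"
  thus "i (Suc k) < i (Suc k')" "j (Suc k') < j (Suc k)" using assms(1) by (auto simp: nested_def)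
next
  assume "1 \<le> s - 1"
  thus "i (Suc (s - 1)) \<le> j (Suc (s - 1))" using assms by (auto simp: nested_def)
qed

lemma family_split_first:
  "1 \<le> s \<Longrightarrow> family s i j = insert (i 1, j 1) (family (s - 1) (\<lambda>k. i (Suc k)) (\<lambda>k. j (Suc k)))"
proof -
  assume "1 \<le> s"
  hence "{1..s} = insert 1 (Suc ` {1..s - 1})" by (auto simp: image_iff intro: bexI[of _ "_ - 1"])
  thus ?thesis by (simp only: image_insert image_image)
qed

lemma nested_lower_bound:
  assumes "nested N s i j"
  shows "(\<forall>q\<in>family s i j. l < fst q) \<longleftrightarrow> (1 \<le> s \<longrightarrow> l < i 1)"
proof -
  have "i 1 \<le> i k" if "k \<in> {1..s}" for k
    using nested_mono[OF assms, of 1 k] that by (cases "k = 1") auto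
  thus ?thesis by force
qed

lemma pair_antichain_insert:
  assumes "pair_antichain T" "\<forall>q\<in>T. l < fst q \<and> snd q < m"
  shows "pair_antichain (insert (l, m) T)"
  using assms unfolding pair_antichain_def by fastforce

definition top_extensions :: "nat \<Rightarrow> nat \<Rightarrow> (nat \<times> nat) set set" where
  "top_extensions n s = {insert (l, n) T | l T.
     T \<in> pair_antichains (n - 1) (s - 1) \<and> 1 \<le> l \<and> l \<le> n \<and> (\<forall>q\<in>T. l < fst q)}"

lemma top_extensionsI:
  "T \<in> pair_antichains (n - 1) (s - 1) \<Longrightarrow> 1 \<le> l \<Longrightarrow> l \<le> n \<Longrightarrow> \<forall>q\<in>T. l < fst q
    \<Longrightarrow> insert (l, n) T \<in> top_extensions n s"
  unfolding top_extensions_def by blast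

lemma antichains_through_top:
  assumes "1 \<le> n" "1 \<le> s"
  shows "{S \<in> pair_antichains n s. n \<in> endpoints S} = top_extensions n s"
proof (intro equalityI subsetI)
  fix S assume "S \<in> {S \<in> pair_antichains n s. n \<in> endpoints S}"
  then obtain i j where nest: "nested n s i j" and S: "S = family s i j" and top: "n \<in> endpoints S"
    using antichain_nested_family by blast
  have range: "\<And>k. k \<in> {1..s} \<Longrightarrow> i k \<le> j k \<and> j k \<le> n \<and> 1 \<le> i k"
    using nest nested_le[OF nest] by (auto simp: nested_def)
  obtain k where k: "k \<in> {1..s}" "j k = n"
    using top range unfolding S endpoints_family by fastforce
  have j1: "j 1 = n"
    using nested_mono[OF nest, of 1 k] k range[of 1] assms(2) by (cases "k = 1") auto
  let ?T = "family (s - 1) (\<lambda>k. i (Suc k)) (\<lambda>k. j (Suc k))"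
  have "?T \<in> pair_antichains (n - 1) (s - 1)"
    using nested_family_antichain[OF nested_tail[OF nest assms(2)]] unfolding j1 .
  moreover have "\<forall>q\<in>?T. i 1 < fst q" using nest assms(2) by (auto simp: nested_def)
  moreover have "S = insert (i 1, n) ?T" using family_split_first[OF assms(2)] S j1 by simp
  moreover have "1 \<le> i 1" "i 1 \<le> n" using range[of 1] assms(2) by auto
  ultimately show "S \<in> top_extensions n s" by (simp add: top_extensionsI)
next
  fix S assume "S \<in> top_extensions n s"
  then obtain l T where T: "T \<subseteq> intervals (n - 1)" "pair_antichain T" "card T = s - 1"
    and l: "1 \<le> l" "l \<le> n" "\<forall>q\<in>T. l < fst q" and S: "S = insert (l, n) T"
    unfolding top_extensions_def pair_antichains_def by blast
  have below: "\<forall>q\<in>T. snd q < n" using T(1) assms(1) by (auto simp: intervals_def)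
  have "finite T" using T(1) finite_intervals by (rule finite_subset)
  moreover have "(l, n) \<notin> T" using below by auto
  ultimately have "card S = s" using S T(3) assms(2) by simp
  moreover have "S \<subseteq> intervals n"
    using S T(1) l intervals_mono[of "n - 1" n] by (auto simp: intervals_def)
  moreover have "pair_antichain S" using pair_antichain_insert[OF T(2)] l(3) below S by blast
  moreover have "n \<in> endpoints S" using S by (auto simp: endpoints_def)
  ultimately show "S \<in> {S \<in> pair_antichains n s. n \<in> endpoints S}" by (simp add: pair_antichains_def)
qed

lemma A2C_eq:
  assumes "1 \<le> n" "1 \<le> s"
  shows "A2C n s = image (beta_pair n) ` {S \<in> pair_antichains n s. n \<in> endpoints S}"
proof -
  have shape: "insert (alphaC l n) ((\<lambda>k. betaC n (i k) (j k)) ` {1..s - 1})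
      = beta_pair n ` insert (l, n) (family (s - 1) i j)" if "l \<le> n" for l i j
    using alphaC_eq_betaC[OF assms(1) that] by (simp add: image_image beta_pair_def)
  have bound: "(2 \<le> s \<longrightarrow> l < i 1) \<longleftrightarrow> (\<forall>q\<in>family (s - 1) i j. l < fst q)"
    if "nested (n - 1) (s - 1) i j" for l i j
    using nested_lower_bound[OF that, of l] assms(2) by auto
  have "A2C n s = image (beta_pair n) ` top_extensions n s"
  proof (intro equalityI subsetI)
    fix X assume "X \<in> A2C n s"
    then obtain l i j where nest: "nested (n - 1) (s - 1) i j" and l: "1 \<le> l" "l \<le> n" "2 \<le> s \<longrightarrow> l < i 1"
      and X: "X = insert (alphaC l n) ((\<lambda>k. betaC n (i k) (j k)) ` {1..s - 1})"
      unfolding A2C_def admissible_iff_nested by blast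
    have "insert (l, n) (family (s - 1) i j) \<in> top_extensions n s"
      using top_extensionsI[OF nested_family_antichain[OF nest] l(1,2)] bound[OF nest] l(3) by blast
    thus "X \<in> image (beta_pair n) ` top_extensions n s" unfolding X shape[OF l(2)] by (rule imageI)
  next
    fix X assume "X \<in> image (beta_pair n) ` top_extensions n s"
    then obtain l T where T: "T \<in> pair_antichains (n - 1) (s - 1)" and l: "1 \<le> l" "l \<le> n"
      "\<forall>q\<in>T. l < fst q" and X: "X = beta_pair n ` insert (l, n) T"
      unfolding top_extensions_def by blast
    obtain i j where nest: "nested (n - 1) (s - 1) i j" and T_eq: "T = family (s - 1) i j"
      using antichain_nested_family[OF T] by blast
    have "X = insert (alphaC l n) ((\<lambda>k. betaC n (i k) (j k)) ` {1..s - 1})"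
      using X shape[OF l(2)] T_eq by simp
    moreover have "2 \<le> s \<longrightarrow> l < i 1" using bound[OF nest] l(3) T_eq by simp
    ultimately show "X \<in> A2C n s"
      unfolding A2C_def admissible_iff_nested using nest l(1,2) by blast
  qed
  thus ?thesis by (simp add: antichains_through_top[OF assms])
qed

lemma beta_image_inj: "1 \<le> n \<Longrightarrow> inj_on (image (beta_pair n)) (Pow (intervals n))"
  by (rule inj_on_image_Pow[OF beta_pair_inj])

lemma pair_antichains_Pow: "pair_antichains N s \<subseteq> Pow (intervals N)"
  by (auto simp: pair_antichains_def)

lemma lower_antichains_Pow: "pair_antichains (n - 1) s \<subseteq> Pow (intervals n)"
  using pair_antichains_Pow intervals_mono[of "n - 1" n] by fastforce

(* Splitting the antichains according to whether n is an endpoint gives the disjoint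
   decomposition of A_s into A^1_s and A^2_s. *)
lemma AbC_split:
  assumes "1 \<le> n" "1 \<le> s"
  shows "AbC n s = A1C n s \<union> A2C n s" and "A1C n s \<inter> A2C n s = {}"
proof -
  let ?top = "{S \<in> pair_antichains n s. n \<in> endpoints S}"
  have split: "pair_antichains n s = pair_antichains (n - 1) s \<union> ?top"
    and disj: "pair_antichains (n - 1) s \<inter> ?top = {}"
    using antichains_avoiding_top[of n s] by auto
  have "AbC n s = image (beta_pair n) ` (pair_antichains (n - 1) s \<union> ?top)"
    unfolding abelian_antichains_eq[OF assms(1)] by (rule arg_cong[OF split])
  thus "AbC n s = A1C n s \<union> A2C n s"
    by (simp only: image_Un A1C_eq A2C_eq[OF assms])
  have "?top \<subseteq> Pow (intervals n)" using pair_antichains_Pow by blast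
  hence "A1C n s \<inter> A2C n s = image (beta_pair n) ` (pair_antichains (n - 1) s \<inter> ?top)"
    unfolding A1C_eq A2C_eq[OF assms]
    by (rule inj_on_image_Int[OF beta_image_inj[OF assms(1)] lower_antichains_Pow, symmetric])
  thus "A1C n s \<inter> A2C n s = {}" using disj by simp
qed

lemma card_A1C:
  assumes "1 \<le> n" "1 \<le> s"
  shows "card (A1C n s) = ((n - 1) choose (2 * s)) + ((n - 1) choose (2 * s - 1))"
proof -
  have "card (A1C n s) = card (pair_antichains (n - 1) s)"
    unfolding A1C_eq by (rule card_image[OF inj_on_subset[OF beta_image_inj[OF assms(1)] lower_antichains_Pow]])
  also have "\<dots> = card (halfsize_sets (n - 1) s)" by (rule bij_betw_same_card[OF endpoints_bij])
  finally show ?thesis using card_halfsize_sets[OF assms(2)] by simp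
qed

lemma card_A2C:
  assumes "1 \<le> n" "1 \<le> s"
  shows "card (A2C n s) = ((n - 1) choose (2 * s - 1)) + ((n - 1) choose (2 * s - 2))"
proof -
  have "card (A2C n s) = card {S \<in> pair_antichains n s. n \<in> endpoints S}"
    unfolding A2C_eq[OF assms]
    by (rule card_image[OF inj_on_subset[OF beta_image_inj[OF assms(1)]]]) (use pair_antichains_Pow in blast)
  also have "\<dots> = card {U \<in> halfsize_sets n s. n \<in> U}" by (rule card_pair_antichains_where)
  finally show ?thesis using card_halfsize_sets_containing_top[OF assms(2,1)] by simp
qed

lemma card_AbC:
  assumes "1 \<le> n"
  shows "card (AbC n s) = card (halfsize_sets n s)"
proof -
  have "card (AbC n s) = card (pair_antichains n s)"
    unfolding abelian_antichains_eq[OF assms]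
    by (rule card_image[OF inj_on_subset[OF beta_image_inj[OF assms] pair_antichains_Pow]])
  also have "\<dots> = card (halfsize_sets n s)" by (rule bij_betw_same_card[OF endpoints_bij])
  finally show ?thesis .
qed

lemma AbC_nonempty_le:
  assumes "1 \<le> n" "AbC n s \<noteq> {}"
  shows "s \<le> n"
proof -
  obtain S where "S \<in> pair_antichains n s"
    using assms(2) unfolding abelian_antichains_eq[OF assms(1)] by blast
  hence "endpoints S \<in> halfsize_sets n s" using bij_betw_imp_surj_on[OF endpoints_bij] by blast
  thus ?thesis by (rule halfsize_sets_le)
qed

theorem mainTheorem10:
  fixes n :: nat
  assumes "n \<ge> 2"
  shows "(\<forall>s\<ge>1. AbC n s = A1C n s \<union> A2C n s \<and> A1C n s \<inter> A2C n s = {}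
            \<and> card (A1C n s) = ((n - 1) choose (2*s)) + ((n - 1) choose (2*s - 1))
            \<and> card (A2C n s) = ((n - 1) choose (2*s - 1)) + ((n - 1) choose (2*s - 2)))
         \<and> finite {s. AbC n s \<noteq> {}}
         \<and> (\<Sum>s\<in>{s. AbC n s \<noteq> {}}. card (AbC n s)) = 2 ^ n"
proof -
  have n: "1 \<le> n" using assms by simp
  show ?thesis
  proof (intro conjI allI impI)
    fix s :: nat assume s: "1 \<le> s"
    show "AbC n s = A1C n s \<union> A2C n s" and "A1C n s \<inter> A2C n s = {}" using AbC_split[OF n s] .
    show "card (A1C n s) = ((n - 1) choose (2*s)) + ((n - 1) choose (2*s - 1))" using card_A1C[OF n s] .
    show "card (A2C n s) = ((n - 1) choose (2*s - 1)) + ((n - 1) choose (2*s - 2))" using card_A2C[OF n s] .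
  next
    have bounded: "{s. AbC n s \<noteq> {}} \<subseteq> {..n}" using AbC_nonempty_le[OF n] by blast
    thus "finite {s. AbC n s \<noteq> {}}" by (rule finite_subset) simp
    have "(\<Sum>s\<in>{s. AbC n s \<noteq> {}}. card (AbC n s)) = (\<Sum>s\<le>n. card (AbC n s))"
      by (rule sum.mono_neutral_left) (use bounded in auto)
    also have "\<dots> = 2 ^ n" using card_AbC[OF n] sum_card_halfsize_sets by simp
    finally show "(\<Sum>s\<in>{s. AbC n s \<noteq> {}}. card (AbC n s)) = 2 ^ n" .
  qed
qed

end
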